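(* Let $\Sigma$ be a Hamiltonian surface in the Brady complex $X$. Then for every vertex $x$ of $X$, the Hamiltonian cycle $\Sigma\cap L_x$ of the link $L_x$ contains precisely two rungs (edges labeled $\mathcal{L}$).
   Context: The Brady complex $X$ is the simply connected CAT(0) piecewise Euclidean 2-complex (constructed by T. Brady) on which $\mathrm{Aut}(F_2)$ acts properly and cocompactly by cellular isometries, transitively on vertices. Its closed 2-cells (faces) are unit equilateral triangles and unit lozenges (rhombi with angles $\pi/3$ and $2\pi/3$); every edge lies in exactly one triangle and two lozenges. The link $L_x$ of a vertex $x$ is the graph whose vertices are the edges of $X$ at $x$ and whose edges are the corners at $x$ of faces containing $x$; a link edge is labeled $t$ if it comes from a triangle, $\ell$ if from a lozenge corner of angle $\pi/3$, and $\mathcal{L}$ if from a lozenge corner of angle $2\pi/3$. Each labeled link $L_x$ is isomorphic to the Moebius ladder with vertices $u_0,\dots,u_3,w_0,\dots,w_3$, rungs $u_iw_i$ labeled $\mathcal{L}$, horizontal edges $u_0u_1,u_2u_3,w_0w_1,w_2w_3$ labeled $\ell$ and horizontal edges $u_1u_2,u_3w_0,w_1w_2,w_3u_0$ labeled $t$. A Hamiltonian surface in $X$ is a connected union $\Sigma$ of closed faces which is a surface without boundary, contains every vertex and every edge of $X$, and has no multiple vertex; for each vertex $x$, $\Sigma\cap L_x$ (the link edges given by corners of faces of $\Sigma$) is then a Hamiltonian cycle of $L_x$. *)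

theory Defs
  imports Main
begin

text \<open>Combinatorial model of a piecewise Euclidean 2-complex whose faces are unit
equilateral triangles and unit lozenges.  Vertices are the elements of a type 'v,
edges are 2-element vertex sets, a triangle is given by its 3-element vertex set and a
lozenge by the pair (A, B) of its acute diagonal A (the two corners of angle pi/3) and
its obtuse diagonal B (the two corners of angle 2pi/3); its boundary edges join each
vertex of A to each vertex of B.\<close>

datatype 'v face = Tri "'v set" | Loz "'v set" "'v set"

datatype lab = LabT | Labl | LabL   \<comment> \<open>t, l (angle pi/3 lozenge corner), L (angle 2pi/3)\<close>

fun verts :: "'v face \<Rightarrow> 'v set" where
  "verts (Tri S) = S"
| "verts (Loz A B) = A \<union> B"

fun face_edges :: "'v face \<Rightarrow> 'v set set" where
  "face_edges (Tri S) = {e. e \<subseteq> S \<and> card e = 2}"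
| "face_edges (Loz A B) = {{a, b} | a b. a \<in> A \<and> b \<in> B}"

text \<open>The corner of a face F at one of its vertices x: the two link vertices it joins
(given by the other endpoints of the two boundary edges of F at x) and its label.\<close>

fun corner_pts :: "'v \<Rightarrow> 'v face \<Rightarrow> 'v set" where
  "corner_pts x (Tri S) = S - {x}"
| "corner_pts x (Loz A B) = (if x \<in> A then B else A)"

fun corner_lab :: "'v \<Rightarrow> 'v face \<Rightarrow> lab" where
  "corner_lab x (Tri S) = LabT"
| "corner_lab x (Loz A B) = (if x \<in> A then Labl else LabL)"

definition well_formed_face :: "'v set set \<Rightarrow> 'v face \<Rightarrow> bool" where
  "well_formed_face Ed F \<longleftrightarrow>
     (case F of
        Tri S \<Rightarrow> card S = 3
      | Loz A B \<Rightarrow> card A = 2 \<and> card B = 2 \<and> A \<inter> B = {})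
     \<and> face_edges F \<subseteq> Ed"

definition nbrs :: "'v set set \<Rightarrow> 'v \<Rightarrow> 'v set" where
  "nbrs Ed x = {y. {x, y} \<in> Ed}"

definition faces_at :: "'v face set \<Rightarrow> 'v \<Rightarrow> 'v face set" where
  "faces_at Fs x = {F \<in> Fs. x \<in> verts F}"

text \<open>The labeled Moebius ladder: u_i is encoded as i and w_i as 4 + i (i = 0..3).\<close>

definition ladder_verts :: "nat set" where
  "ladder_verts = {0..<8}"

definition ladder_edges :: "(nat set \<times> lab) set" where
  "ladder_edges =
    {({0,4}, LabL), ({1,5}, LabL), ({2,6}, LabL), ({3,7}, LabL),
     ({0,1}, Labl), ({2,3}, Labl), ({4,5}, Labl), ({6,7}, Labl),
     ({1,2}, LabT), ({3,4}, LabT), ({5,6}, LabT), ({7,0}, LabT)}"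

text \<open>The labeled link of x is isomorphic to the labeled Moebius ladder: a bijection of
the edges at x (identified with the neighbours of x) onto the ladder vertices under which
the corners at x of faces containing x correspond bijectively to the labeled ladder edges.\<close>

definition link_is_ladder :: "'v set set \<Rightarrow> 'v face set \<Rightarrow> 'v \<Rightarrow> bool" where
  "link_is_ladder Ed Fs x \<longleftrightarrow>
     (\<exists>\<phi>. bij_betw \<phi> (nbrs Ed x) ladder_verts \<and>
          bij_betw (\<lambda>F. (\<phi> ` corner_pts x F, corner_lab x F)) (faces_at Fs x) ladder_edges)"

fun is_walk :: "'v set set \<Rightarrow> 'v list \<Rightarrow> bool" where
  "is_walk Ed [] = False"
| "is_walk Ed [a] = True"
| "is_walk Ed (a # b # xs) = ({a, b} \<in> Ed \<and> is_walk Ed (b # xs))"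

definition face_loop :: "'v face \<Rightarrow> 'v list \<Rightarrow> bool" where
  "face_loop F xs \<longleftrightarrow>
     (case F of
        Tri S \<Rightarrow> (\<exists>a b c. S = {a, b, c} \<and> distinct [a, b, c] \<and> xs = [a, b, c, a])
      | Loz A B \<Rightarrow> (\<exists>a b c d. xs = [a, b, c, d, a] \<and> distinct [a, b, c, d] \<and>
                   ((A = {a, c} \<and> B = {b, d}) \<or> (A = {b, d} \<and> B = {a, c}))))"

inductive elem_move :: "'v set set \<Rightarrow> 'v face set \<Rightarrow> 'v list \<Rightarrow> 'v list \<Rightarrow> bool"
  for Ed Fs where
  spur: "{a, b} \<in> Ed \<Longrightarrow> elem_move Ed Fs (p @ [a] @ q) (p @ [a, b, a] @ q)"
| face: "F \<in> Fs \<Longrightarrow> face_loop F xs \<Longrightarrow> hd xs = a \<Longrightarrow>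
         elem_move Ed Fs (p @ [a] @ q) (p @ xs @ q)"

definition homotopic_walks :: "'v set set \<Rightarrow> 'v face set \<Rightarrow> 'v list \<Rightarrow> 'v list \<Rightarrow> bool" where
  "homotopic_walks Ed Fs = (\<lambda>xs ys. (\<lambda>p q. elem_move Ed Fs p q \<or> elem_move Ed Fs q p)\<^sup>*\<^sup>* xs ys)"

definition simply_connected_cx :: "'v set set \<Rightarrow> 'v face set \<Rightarrow> bool" where
  "simply_connected_cx Ed Fs \<longleftrightarrow>
     (\<forall>u v. \<exists>xs. is_walk Ed xs \<and> hd xs = u \<and> last xs = v) \<and>
     (\<forall>xs. is_walk Ed xs \<longrightarrow> hd xs = last xs \<longrightarrow> homotopic_walks Ed Fs xs [hd xs])"

text \<open>The Brady complex, characterised (up to isomorphism) as a simply connected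
triangle/lozenge 2-complex (vertex set UNIV) in which every edge lies in exactly one
triangle and two lozenges and every labeled vertex link is the labeled Moebius ladder.\<close>

definition brady_complex :: "'v set set \<Rightarrow> 'v face set \<Rightarrow> bool" where
  "brady_complex Ed Fs \<longleftrightarrow>
     (\<forall>e\<in>Ed. card e = 2) \<and>
     (\<forall>F\<in>Fs. well_formed_face Ed F) \<and>
     (\<forall>e\<in>Ed. card {F\<in>Fs. e \<in> face_edges F \<and> (\<exists>S. F = Tri S)} = 1 \<and>
              card {F\<in>Fs. e \<in> face_edges F \<and> (\<exists>A B. F = Loz A B)} = 2) \<and>
     (\<forall>x. link_is_ladder Ed Fs x) \<and>
     simply_connected_cx Ed Fs"

text \<open>Hamiltonian surface: a connected union of closed faces which is a surface without
boundary (every edge of it lies in exactly two of its faces, and the corners at each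
vertex form a connected link, i.e. no multiple vertex), containing every vertex and edge.\<close>

definition hamiltonian_surface :: "'v set set \<Rightarrow> 'v face set \<Rightarrow> 'v face set \<Rightarrow> bool" where
  "hamiltonian_surface Ed Fs \<Sigma> \<longleftrightarrow>
     \<Sigma> \<subseteq> Fs \<and> \<Sigma> \<noteq> {} \<and>
     (\<forall>F\<in>\<Sigma>. \<forall>G\<in>\<Sigma>. (\<lambda>F' G'. verts F' \<inter> verts G' \<noteq> {})\<^sup>*\<^sup>* F G) \<and>
     (\<forall>x. \<exists>F\<in>\<Sigma>. x \<in> verts F) \<and>
     (\<forall>e\<in>Ed. \<exists>F\<in>\<Sigma>. e \<in> face_edges F) \<and>
     (\<forall>e. (\<exists>F\<in>\<Sigma>. e \<in> face_edges F) \<longrightarrow> card {F\<in>\<Sigma>. e \<in> face_edges F} = 2) \<and>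
     (\<forall>x. \<forall>y\<in>nbrs Ed x. \<forall>z\<in>nbrs Ed x.
        (\<lambda>p q. \<exists>F\<in>faces_at \<Sigma> x. corner_pts x F = {p, q})\<^sup>*\<^sup>* y z)"

definition rungs_at :: "'v face set \<Rightarrow> 'v \<Rightarrow> 'v face set" where
  "rungs_at \<Sigma> x = {F \<in> faces_at \<Sigma> x. corner_lab x F = LabL}"

end

theory Submission
  imports Defs
begin

text \<open>
  The corners of \<Sigma> at x form a Hamiltonian cycle of the labelled Moebius ladder.
  Such a cycle either passes through exactly two rungs or is the rim, the 8-cycle of all
  t- and l-edges; and no t-edge of it has rungs at both ends.

  Suppose the cycle at x is the rim. Its t-edges give a triangle {x, a, b} of \<Sigma>; the
  second face of \<Sigma> on the edge ab is a lozenge, since ab lies in only one triangle of X.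
  Say a is an acute and b an obtuse vertex of it. As the rim contains every l-corner at x,
  some lozenge of \<Sigma> has x as acute and b as obtuse vertex. In the link at b, the t-corner
  {x, a} of the triangle then has rungs at both ends, which is impossible.
\<close>

definition exactly_two :: "bool \<Rightarrow> bool \<Rightarrow> bool \<Rightarrow> bool" where
  "exactly_two P Q R \<longleftrightarrow> (P \<and> Q \<and> \<not> R) \<or> (P \<and> \<not> Q \<and> R) \<or> (\<not> P \<and> Q \<and> R)"

lemma card_Int_three_eq_2_iff:
  assumes "a \<noteq> b" "a \<noteq> c" "b \<noteq> c"
  shows "card (S \<inter> {a, b, c}) = 2 \<longleftrightarrow> exactly_two (a \<in> S) (b \<in> S) (c \<in> S)"
  using assms by (cases "a \<in> S"; cases "b \<in> S"; cases "c \<in> S") (auto simp: exactly_two_def Int_insert_right)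

lemma Collect_mem_insert:
  "{x \<in> insert a A. P x} = (if P a then insert a {x \<in> A. P x} else {x \<in> A. P x})"
  by auto

definition ladder_hamiltonian_cycle :: "(nat set \<times> lab) set \<Rightarrow> bool" where
  "ladder_hamiltonian_cycle S \<longleftrightarrow> S \<subseteq> ladder_edges \<and>
     (\<forall>v\<in>ladder_verts. card {e\<in>S. v \<in> fst e} = 2) \<and>
     (\<forall>v\<in>ladder_verts. \<forall>w\<in>ladder_verts. (\<lambda>p q. \<exists>e\<in>S. fst e = {p, q})\<^sup>*\<^sup>* v w)"

lemma ladder_hamiltonian_cycle_degrees:
  assumes "ladder_hamiltonian_cycle S"
  shows "exactly_two (({0,4},LabL) \<in> S) (({0,1},Labl) \<in> S) (({7,0},LabT) \<in> S)"
    and "exactly_two (({1,5},LabL) \<in> S) (({0,1},Labl) \<in> S) (({1,2},LabT) \<in> S)"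
    and "exactly_two (({2,6},LabL) \<in> S) (({2,3},Labl) \<in> S) (({1,2},LabT) \<in> S)"
    and "exactly_two (({3,7},LabL) \<in> S) (({2,3},Labl) \<in> S) (({3,4},LabT) \<in> S)"
    and "exactly_two (({0,4},LabL) \<in> S) (({4,5},Labl) \<in> S) (({3,4},LabT) \<in> S)"
    and "exactly_two (({1,5},LabL) \<in> S) (({4,5},Labl) \<in> S) (({5,6},LabT) \<in> S)"
    and "exactly_two (({2,6},LabL) \<in> S) (({6,7},Labl) \<in> S) (({5,6},LabT) \<in> S)"
    and "exactly_two (({3,7},LabL) \<in> S) (({6,7},Labl) \<in> S) (({7,0},LabT) \<in> S)"
proof -
  have "card (S \<inter> {e \<in> ladder_edges. v \<in> fst e}) = 2" if "v < 8" for v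
  proof -
    have "S \<inter> {e \<in> ladder_edges. v \<in> fst e} = {e \<in> S. v \<in> fst e}"
      using assms by (auto simp: ladder_hamiltonian_cycle_def)
    then show ?thesis using assms that by (simp add: ladder_hamiltonian_cycle_def ladder_verts_def)
  qed
  note deg = this[unfolded ladder_edges_def Collect_mem_insert]
  show "exactly_two (({0,4},LabL) \<in> S) (({0,1},Labl) \<in> S) (({7,0},LabT) \<in> S)"
    using deg[of 0] by (simp add: card_Int_three_eq_2_iff)
  show "exactly_two (({1,5},LabL) \<in> S) (({0,1},Labl) \<in> S) (({1,2},LabT) \<in> S)"
    using deg[of 1] by (simp add: card_Int_three_eq_2_iff)
  show "exactly_two (({2,6},LabL) \<in> S) (({2,3},Labl) \<in> S) (({1,2},LabT) \<in> S)"
    using deg[of 2] by (simp add: card_Int_three_eq_2_iff)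
  show "exactly_two (({3,7},LabL) \<in> S) (({2,3},Labl) \<in> S) (({3,4},LabT) \<in> S)"
    using deg[of 3] by (simp add: card_Int_three_eq_2_iff)
  show "exactly_two (({0,4},LabL) \<in> S) (({4,5},Labl) \<in> S) (({3,4},LabT) \<in> S)"
    using deg[of 4] by (simp add: card_Int_three_eq_2_iff)
  show "exactly_two (({1,5},LabL) \<in> S) (({4,5},Labl) \<in> S) (({5,6},LabT) \<in> S)"
    using deg[of 5] by (simp add: card_Int_three_eq_2_iff)
  show "exactly_two (({2,6},LabL) \<in> S) (({6,7},Labl) \<in> S) (({5,6},LabT) \<in> S)"
    using deg[of 6] by (simp add: card_Int_three_eq_2_iff)
  show "exactly_two (({3,7},LabL) \<in> S) (({6,7},Labl) \<in> S) (({7,0},LabT) \<in> S)"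
    using deg[of 7] by (simp add: card_Int_three_eq_2_iff)
qed

lemma ladder_hamiltonian_cycle_crosses_cut:
  assumes "ladder_hamiltonian_cycle S" "v \<in> ladder_verts" "w \<in> ladder_verts" "v \<in> C" "w \<notin> C"
  shows "\<exists>e\<in>S. fst e \<inter> C \<noteq> {} \<and> \<not> fst e \<subseteq> C"
proof (rule ccontr)
  assume uncrossed: "\<not> ?thesis"
  have "(\<lambda>p q. \<exists>e\<in>S. fst e = {p, q})\<^sup>*\<^sup>* v w"
    using assms(1-3) by (simp add: ladder_hamiltonian_cycle_def)
  then have "w \<in> C"
    by (induction rule: rtranclp_induct) (use assms(4) uncrossed in auto)
  with assms(5) show False by contradiction
qed

lemma ladder_hamiltonian_cycle_not_all_rungs:
  assumes "ladder_hamiltonian_cycle S"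
  shows "\<not> (({0,4},LabL) \<in> S \<and> ({1,5},LabL) \<in> S \<and> ({2,6},LabL) \<in> S \<and> ({3,7},LabL) \<in> S)"
proof
  assume rungs: "({0,4},LabL) \<in> S \<and> ({1,5},LabL) \<in> S \<and> ({2,6},LabL) \<in> S \<and> ({3,7},LabL) \<in> S"
  \<comment> \<open>Then every vertex meets one rim edge, so the cycle falls apart into two squares.\<close>
  have S_sub: "S \<subseteq> ladder_edges"
    using assms by (simp add: ladder_hamiltonian_cycle_def)
  have "(\<forall>E. (E, Labl) \<notin> S) \<or> (\<forall>E. (E, LabT) \<notin> S)"
    using ladder_hamiltonian_cycle_degrees[OF assms] rungs S_sub
    by (auto simp: exactly_two_def ladder_edges_def)
  then show False
  proof
    assume "\<forall>E. (E, Labl) \<notin> S"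
    then have "\<not> (\<exists>e\<in>S. fst e \<inter> {0,3,4,7} \<noteq> {} \<and> \<not> fst e \<subseteq> {0,3,4,7})"
      using S_sub by (auto simp: ladder_edges_def)
    then show False
      using ladder_hamiltonian_cycle_crosses_cut[OF assms, of 0 1 "{0,3,4,7}"] by (auto simp: ladder_verts_def)
  next
    assume "\<forall>E. (E, LabT) \<notin> S"
    then have "\<not> (\<exists>e\<in>S. fst e \<inter> {0,1,4,5} \<noteq> {} \<and> \<not> fst e \<subseteq> {0,1,4,5})"
      using S_sub by (auto simp: ladder_edges_def)
    then show False
      using ladder_hamiltonian_cycle_crosses_cut[OF assms, of 0 2 "{0,1,4,5}"] by (auto simp: ladder_verts_def)
  qed
qed

definition ladder_rim :: "(nat set \<times> lab) set" where
  "ladder_rim = {e \<in> ladder_edges. snd e \<noteq> LabL}"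

lemma ladder_hamiltonian_cycle_rungs:
  assumes "ladder_hamiltonian_cycle S"
  shows "card {e \<in> S. snd e = LabL} = 2 \<or> ladder_rim \<subseteq> S"
proof -
  have "S \<subseteq> ladder_edges"
    using assms by (simp add: ladder_hamiltonian_cycle_def)
  then have "{e \<in> S. snd e = LabL} = S \<inter> {e \<in> ladder_edges. snd e = LabL}"
    by blast
  then have rungs: "{e \<in> S. snd e = LabL} = S \<inter> {({0,4},LabL), ({1,5},LabL), ({2,6},LabL), ({3,7},LabL)}"
    unfolding ladder_edges_def Collect_mem_insert by simp
  have rim: "ladder_rim = {({0,1},Labl), ({2,3},Labl), ({4,5},Labl), ({6,7},Labl),
      ({1,2},LabT), ({3,4},LabT), ({5,6},LabT), ({7,0},LabT)}"
    unfolding ladder_rim_def ladder_edges_def Collect_mem_insert by simp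
  show ?thesis
    using ladder_hamiltonian_cycle_degrees[OF assms] ladder_hamiltonian_cycle_not_all_rungs[OF assms]
    unfolding rungs rim exactly_two_def
    by (cases "({0,4},LabL) \<in> S"; cases "({1,5},LabL) \<in> S"; cases "({2,6},LabL) \<in> S";
        cases "({3,7},LabL) \<in> S") (simp_all add: Int_insert_right doubleton_eq_iff)
qed

lemma ladder_rung_at:
  assumes "S \<subseteq> ladder_edges" "(E, LabL) \<in> S" "v \<in> E"
  shows "({v mod 4, v mod 4 + 4}, LabL) \<in> S"
proof -
  have "E = {0,4} \<or> E = {1,5} \<or> E = {2,6} \<or> E = {3,7}"
    using assms(1,2) unfolding ladder_edges_def by blast
  then show ?thesis
    using assms(2,3) by auto
qed

lemma ladder_hamiltonian_cycle_no_triangle_corner_between_rungs: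
  assumes cycle: "ladder_hamiltonian_cycle S"
    and "({p, q}, LabT) \<in> S" "(E, LabL) \<in> S" "p \<in> E" "(E', LabL) \<in> S" "q \<in> E'"
  shows False
proof -
  have S_sub: "S \<subseteq> ladder_edges"
    using cycle by (simp add: ladder_hamiltonian_cycle_def)
  then have "{p, q} = {1,2} \<or> {p, q} = {3,4} \<or> {p, q} = {5,6} \<or> {p, q} = {7,0}"
    using assms(2) unfolding ladder_edges_def by blast
  then have "(p, q) \<in> {(1,2), (2,1), (3,4), (4,3), (5,6), (6,5), (7,0), (0,7)}"
    by (auto simp: doubleton_eq_iff)
  then have "(({1,2},LabT) \<in> S \<and> ({1,5},LabL) \<in> S \<and> ({2,6},LabL) \<in> S) \<or>
      (({3,4},LabT) \<in> S \<and> ({3,7},LabL) \<in> S \<and> ({0,4},LabL) \<in> S) \<or>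
      (({5,6},LabT) \<in> S \<and> ({1,5},LabL) \<in> S \<and> ({2,6},LabL) \<in> S) \<or>
      (({7,0},LabT) \<in> S \<and> ({3,7},LabL) \<in> S \<and> ({0,4},LabL) \<in> S)"
    using assms(2) ladder_rung_at[OF S_sub assms(3,4)] ladder_rung_at[OF S_sub assms(5,6)]
    by (elim insertE emptyE) (simp_all add: insert_commute)
  \<comment> \<open>Rungs at both ends of a t-edge force all four rungs by the degree conditions.\<close>
  then show False
    using ladder_hamiltonian_cycle_degrees[OF cycle] ladder_hamiltonian_cycle_not_all_rungs[OF cycle]
    unfolding exactly_two_def by argo
qed

lemma ladder_vert_on_acute_edge:
  assumes "v \<in> ladder_verts"
  shows "\<exists>E. (E, Labl) \<in> ladder_edges \<and> v \<in> E"
proof -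
  have "\<exists>E\<in>{{0,1}, {2,3}, {4,5}, {6,7}}. v \<in> E"
    using assms by (auto simp: ladder_verts_def)
  moreover have "\<forall>E\<in>{{0,1}, {2,3}, {4,5}, {6,7}}. (E, Labl) \<in> ladder_edges"
    by (simp add: ladder_edges_def)
  ultimately show ?thesis
    by blast
qed

lemma rtranclp_map:
  assumes "R\<^sup>*\<^sup>* a b" "\<And>p q. R p q \<Longrightarrow> S (f p) (f q)"
  shows "S\<^sup>*\<^sup>* (f a) (f b)"
  using assms(1) by (induction rule: rtranclp_induct) (auto intro: rtranclp.rtrancl_into_rtrancl assms(2))

lemma face_edge_subset_verts: "e \<in> face_edges F \<Longrightarrow> e \<subseteq> verts F"
  by (cases F) auto

lemma face_edge_iff_mem_corner_pts:
  assumes "well_formed_face Ed F" "x \<in> verts F"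
  shows "{x, y} \<in> face_edges F \<longleftrightarrow> y \<in> corner_pts x F"
proof (cases F)
  case (Tri T)
  then show ?thesis using assms by (auto simp: well_formed_face_def card_insert_if)
next
  case (Loz A B)
  then show ?thesis using assms by (auto simp: well_formed_face_def doubleton_eq_iff)
qed

lemma corner_pts_subset_nbrs:
  assumes "well_formed_face Ed F" "x \<in> verts F"
  shows "corner_pts x F \<subseteq> nbrs Ed x"
  using assms face_edge_iff_mem_corner_pts[OF assms] by (auto simp: well_formed_face_def nbrs_def)

locale brady_surface =
  fixes Ed :: "'v set set" and Fs :: "'v face set" and \<Sigma> :: "'v face set"
  assumes brady: "brady_complex Ed Fs"
    and surface: "hamiltonian_surface Ed Fs \<Sigma>"
begin

lemma surface_subset_faces: "\<Sigma> \<subseteq> Fs"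
  using surface by (simp add: hamiltonian_surface_def)

lemma surface_face_well_formed: "F \<in> \<Sigma> \<Longrightarrow> well_formed_face Ed F"
  using brady surface_subset_faces by (auto simp: brady_complex_def)

lemma card_surface_faces_on_edge:
  assumes "e \<in> Ed"
  shows "card {F \<in> \<Sigma>. e \<in> face_edges F} = 2"
  using assms surface unfolding hamiltonian_surface_def by blast

lemma surface_faces_on_edge_eq:
  "{F \<in> \<Sigma>. {x, y} \<in> face_edges F} = {F \<in> faces_at \<Sigma> x. y \<in> corner_pts x F}"
proof -
  have "F \<in> \<Sigma> \<and> {x, y} \<in> face_edges F \<longleftrightarrow> F \<in> faces_at \<Sigma> x \<and> y \<in> corner_pts x F" for F
  proof (cases "F \<in> \<Sigma> \<and> x \<in> verts F")
    case True
    then show ?thesis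
      using face_edge_iff_mem_corner_pts[OF surface_face_well_formed] by (auto simp: faces_at_def)
  next
    case False
    then show ?thesis
      using face_edge_subset_verts[of "{x, y}" F] by (auto simp: faces_at_def)
  qed
  then show ?thesis by blast
qed

lemma triangle_edge_on_surface_lozenge:
  assumes "Tri T \<in> \<Sigma>" "e \<in> face_edges (Tri T)"
  obtains A B where "Loz A B \<in> \<Sigma>" "e \<in> face_edges (Loz A B)"
proof -
  have "face_edges (Tri T) \<subseteq> Ed"
    using surface_face_well_formed[OF assms(1)] by (simp add: well_formed_face_def)
  with assms(2) have "e \<in> Ed" by blast
  then have two: "card {F \<in> \<Sigma>. e \<in> face_edges F} = 2"
    and one_triangle: "card {F \<in> Fs. e \<in> face_edges F \<and> (\<exists>S. F = Tri S)} = 1"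
    using card_surface_faces_on_edge brady by (auto simp: brady_complex_def)
  obtain P where P: "P \<in> \<Sigma>" "e \<in> face_edges P" "P \<noteq> Tri T"
  proof -
    have "\<not> {F \<in> \<Sigma>. e \<in> face_edges F} \<subseteq> {Tri T}"
    proof
      assume "{F \<in> \<Sigma>. e \<in> face_edges F} \<subseteq> {Tri T}"
      then have "card {F \<in> \<Sigma>. e \<in> face_edges F} \<le> card {Tri T}"
        by (rule card_mono[rotated]) simp
      with two show False by simp
    qed
    then show ?thesis using that by blast
  qed
  obtain t where t: "{F \<in> Fs. e \<in> face_edges F \<and> (\<exists>S. F = Tri S)} = {t}"
    using card_1_singletonE[OF one_triangle] by blast
  have "\<not> (\<exists>S. P = Tri S)"
  proof
    assume "\<exists>S. P = Tri S"
    then have "P \<in> {F \<in> Fs. e \<in> face_edges F \<and> (\<exists>S. F = Tri S)}"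
      using P surface_subset_faces by blast
    moreover have "Tri T \<in> {F \<in> Fs. e \<in> face_edges F \<and> (\<exists>S. F = Tri S)}"
      using assms surface_subset_faces by blast
    ultimately show False
      using P(3) unfolding t by simp
  qed
  then obtain A B where "P = Loz A B"
    by (cases P) auto
  with P that show ?thesis by blast
qed

lemma lozenge_on_opposite_edge:
  assumes "Tri T \<in> \<Sigma>" "x \<in> T"
  obtains a b A B where "T = {a, x, b}" "x \<noteq> a" "x \<noteq> b" "a \<noteq> b"
    and "Loz A B \<in> \<Sigma>" "a \<in> A" "b \<in> B" "b \<notin> A"
proof -
  have "card T = 3"
    using surface_face_well_formed[OF assms(1)] by (simp add: well_formed_face_def)
  then have "card (T - {x}) = 2"
    using assms(2) by (simp add: card_gt_0_iff)
  then have "T - {x} \<in> face_edges (Tri T)"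
    by auto
  then obtain A B where AB: "Loz A B \<in> \<Sigma>" "T - {x} \<in> face_edges (Loz A B)"
    by (rule triangle_edge_on_surface_lozenge[OF assms(1)])
  then obtain a b where ab: "T - {x} = {a, b}" "a \<in> A" "b \<in> B"
    by auto
  have "A \<inter> B = {}"
    using surface_face_well_formed[OF AB(1)] by (simp add: well_formed_face_def)
  then have "b \<notin> A" "a \<noteq> b"
    using ab(2,3) by blast+
  moreover have "T = {a, x, b}" "x \<noteq> a" "x \<noteq> b"
    using ab(1) assms(2) by auto
  ultimately show ?thesis
    using that AB(1) ab(2,3) by blast
qed

end

locale brady_surface_chart = brady_surface +
  fixes x :: 'v and \<phi> :: "'v \<Rightarrow> nat"
  assumes chart_verts: "bij_betw \<phi> (nbrs Ed x) ladder_verts"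
    and chart_corners: "bij_betw (\<lambda>F. (\<phi> ` corner_pts x F, corner_lab x F)) (faces_at Fs x) ladder_edges"
begin

definition link_corner :: "'v face \<Rightarrow> nat set \<times> lab" where
  "link_corner F = (\<phi> ` corner_pts x F, corner_lab x F)"

definition surface_link :: "(nat set \<times> lab) set" where
  "surface_link = link_corner ` faces_at \<Sigma> x"

lemma faces_at_surface_subset: "faces_at \<Sigma> x \<subseteq> faces_at Fs x"
  using surface_subset_faces by (auto simp: faces_at_def)

lemma inj_on_link_corner: "inj_on link_corner (faces_at \<Sigma> x)"
  using chart_corners faces_at_surface_subset unfolding bij_betw_def link_corner_def
  by (blast intro: inj_on_subset)

lemma surface_link_subset: "surface_link \<subseteq> ladder_edges"
  using chart_corners faces_at_surface_subset unfolding bij_betw_def surface_link_def link_corner_def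
  by blast

lemma chart_mem_corner_iff:
  assumes "F \<in> faces_at \<Sigma> x" "y \<in> nbrs Ed x"
  shows "\<phi> y \<in> \<phi> ` corner_pts x F \<longleftrightarrow> y \<in> corner_pts x F"
proof -
  have "corner_pts x F \<subseteq> nbrs Ed x"
    using assms(1) surface_face_well_formed by (intro corner_pts_subset_nbrs) (auto simp: faces_at_def)
  then show ?thesis
    using chart_verts assms(2) by (metis bij_betw_def inj_on_image_mem_iff)
qed

lemma surface_link_degree:
  assumes "v \<in> ladder_verts"
  shows "card {e \<in> surface_link. v \<in> fst e} = 2"
proof -
  obtain y where y: "y \<in> nbrs Ed x" "v = \<phi> y"
    using assms chart_verts by (auto simp: bij_betw_def)
  have "{e \<in> surface_link. v \<in> fst e} = link_corner ` {F \<in> faces_at \<Sigma> x. y \<in> corner_pts x F}"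
    using chart_mem_corner_iff y by (auto simp: surface_link_def link_corner_def)
  also have "card \<dots> = card {F \<in> \<Sigma>. {x, y} \<in> face_edges F}"
    unfolding surface_faces_on_edge_eq
    by (rule card_image) (rule inj_on_subset[OF inj_on_link_corner], auto)
  also have "\<dots> = 2"
    using y card_surface_faces_on_edge by (simp add: nbrs_def)
  finally show ?thesis .
qed

lemma surface_link_connected:
  assumes "v \<in> ladder_verts" "w \<in> ladder_verts"
  shows "(\<lambda>p q. \<exists>e\<in>surface_link. fst e = {p, q})\<^sup>*\<^sup>* v w"
proof -
  obtain y z where "y \<in> nbrs Ed x" "v = \<phi> y" "z \<in> nbrs Ed x" "w = \<phi> z"
    using assms chart_verts unfolding bij_betw_def by blast
  have "(\<lambda>p q. \<exists>F\<in>faces_at \<Sigma> x. corner_pts x F = {p, q})\<^sup>*\<^sup>* y z"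
    using surface \<open>y \<in> nbrs Ed x\<close> \<open>z \<in> nbrs Ed x\<close> unfolding hamiltonian_surface_def by blast
  then have "(\<lambda>p q. \<exists>e\<in>surface_link. fst e = {p, q})\<^sup>*\<^sup>* (\<phi> y) (\<phi> z)"
    by (rule rtranclp_map) (force simp: surface_link_def link_corner_def)
  with \<open>v = \<phi> y\<close> \<open>w = \<phi> z\<close> show ?thesis by simp
qed

lemma surface_link_hamiltonian: "ladder_hamiltonian_cycle surface_link"
  unfolding ladder_hamiltonian_cycle_def
  by (intro conjI ballI surface_link_subset surface_link_degree surface_link_connected)

lemma card_rungs_at_eq: "card (rungs_at \<Sigma> x) = card {e \<in> surface_link. snd e = LabL}"
proof -
  have "{e \<in> surface_link. snd e = LabL} = link_corner ` rungs_at \<Sigma> x"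
    by (auto simp: surface_link_def rungs_at_def link_corner_def)
  moreover have "inj_on link_corner (rungs_at \<Sigma> x)"
    using inj_on_link_corner by (rule inj_on_subset) (auto simp: rungs_at_def)
  ultimately show ?thesis
    by (simp add: card_image)
qed

lemma obtuse_corner_at_neighbour:
  assumes rim: "ladder_rim \<subseteq> surface_link" and w: "w \<in> nbrs Ed x"
  obtains Q where "Q \<in> faces_at \<Sigma> w" "corner_lab w Q = LabL" "x \<in> corner_pts w Q"
proof -
  obtain E where E: "(E, Labl) \<in> ladder_edges" "\<phi> w \<in> E"
    using ladder_vert_on_acute_edge chart_verts w by (metis bij_betwE)
  then have "(E, Labl) \<in> surface_link"
    using rim by (auto simp: ladder_rim_def)
  \<comment> \<open>The l-corner through w comes from a lozenge with x acute and w obtuse.\<close>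
  then obtain Q where Q: "Q \<in> faces_at \<Sigma> x" "\<phi> ` corner_pts x Q = E" "corner_lab x Q = Labl"
    by (auto simp: surface_link_def link_corner_def)
  obtain A B where AB: "Q = Loz A B" "x \<in> A"
    using Q(3) by (cases Q) (auto split: if_splits)
  have "w \<in> B"
    using chart_mem_corner_iff[OF Q(1) w] E(2) Q(2) AB by simp
  moreover have "A \<inter> B = {}"
    using surface_face_well_formed[of Q] Q(1) AB(1) by (simp add: faces_at_def well_formed_face_def)
  ultimately show ?thesis
    using Q(1) AB by (intro that[of Q]) (auto simp: faces_at_def)
qed

end

context brady_surface
begin

lemma ladder_chart_exists:
  obtains \<phi> where "brady_surface_chart Ed Fs \<Sigma> x \<phi>"
proof -
  have "link_is_ladder Ed Fs x"
    using brady by (simp add: brady_complex_def)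
  then obtain \<phi> where "bij_betw \<phi> (nbrs Ed x) ladder_verts"
      "bij_betw (\<lambda>F. (\<phi> ` corner_pts x F, corner_lab x F)) (faces_at Fs x) ladder_edges"
    unfolding link_is_ladder_def by blast
  then have "brady_surface_chart Ed Fs \<Sigma> x \<phi>"
    by (intro brady_surface_chart.intro brady_surface_axioms brady_surface_chart_axioms.intro)
  then show ?thesis by (rule that)
qed

lemma no_triangle_corner_between_obtuse_corners:
  assumes "Tri {u, u', v} \<in> \<Sigma>" "u \<noteq> v" "u' \<noteq> v"
    and "P \<in> faces_at \<Sigma> v" "corner_lab v P = LabL" "u \<in> corner_pts v P"
    and "Q \<in> faces_at \<Sigma> v" "corner_lab v Q = LabL" "u' \<in> corner_pts v Q"
  shows False
proof -
  obtain \<psi> where "brady_surface_chart Ed Fs \<Sigma> v \<psi>"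
    by (rule ladder_chart_exists)
  then interpret v: brady_surface_chart Ed Fs \<Sigma> v \<psi> .
  have "Tri {u, u', v} \<in> faces_at \<Sigma> v"
    using assms(1) by (simp add: faces_at_def)
  then have "({\<psi> u, \<psi> u'}, LabT) \<in> v.surface_link"
    using assms(2,3) unfolding v.surface_link_def v.link_corner_def
    by (force intro: image_eqI[where x = "Tri {u, u', v}"])
  moreover have "(\<psi> ` corner_pts v P, LabL) \<in> v.surface_link" "(\<psi> ` corner_pts v Q, LabL) \<in> v.surface_link"
    using assms(4,5,7,8) by (auto simp: v.surface_link_def v.link_corner_def)
  ultimately show False
    using ladder_hamiltonian_cycle_no_triangle_corner_between_rungs[OF v.surface_link_hamiltonian]
      assms(6,9) by blast
qed

end

context brady_surface_chart
begin

lemma surface_link_not_rim: "\<not> ladder_rim \<subseteq> surface_link"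
proof
  assume rim: "ladder_rim \<subseteq> surface_link"
  have "({1,2}, LabT) \<in> ladder_rim"
    unfolding ladder_rim_def ladder_edges_def by simp
  with rim have "({1,2}, LabT) \<in> surface_link" ..
  then obtain F where F: "F \<in> faces_at \<Sigma> x" "corner_lab x F = LabT"
    by (auto simp: surface_link_def link_corner_def)
  then obtain T where T: "Tri T \<in> \<Sigma>" "x \<in> T"
    by (cases F) (auto simp: faces_at_def split: if_splits)
  then obtain a b A B where ab: "T = {a, x, b}" "x \<noteq> a" "x \<noteq> b" "a \<noteq> b"
      and lozenge: "Loz A B \<in> \<Sigma>" "a \<in> A" "b \<in> B" "b \<notin> A"
    by (rule lozenge_on_opposite_edge)
  have "b \<in> nbrs Ed x"
    using corner_pts_subset_nbrs[OF surface_face_well_formed[OF T(1)]] T(2) ab(1,3) by auto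
  then obtain Q where "Q \<in> faces_at \<Sigma> b" "corner_lab b Q = LabL" "x \<in> corner_pts b Q"
    by (rule obtuse_corner_at_neighbour[OF rim])
  moreover have "Loz A B \<in> faces_at \<Sigma> b" "corner_lab b (Loz A B) = LabL" "a \<in> corner_pts b (Loz A B)"
    using lozenge by (auto simp: faces_at_def)
  ultimately show False
    using no_triangle_corner_between_obtuse_corners[of a x b] T(1) ab by blast
qed

end

lemma (in brady_surface) card_rungs_at_eq_2: "card (rungs_at \<Sigma> x) = 2"
proof -
  obtain \<phi> where "brady_surface_chart Ed Fs \<Sigma> x \<phi>"
    by (rule ladder_chart_exists)
  then interpret brady_surface_chart Ed Fs \<Sigma> x \<phi> .
  show ?thesis
    using ladder_hamiltonian_cycle_rungs[OF surface_link_hamiltonian] surface_link_not_rim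
      card_rungs_at_eq by simp
qed

theorem mainTheorem4:
  fixes Ed :: "'v set set" and Fs :: "'v face set" and \<Sigma> :: "'v face set"
  assumes "brady_complex Ed Fs"
    and "hamiltonian_surface Ed Fs \<Sigma>"
  shows "\<forall>x. card (rungs_at \<Sigma> x) = 2"
proof -
  interpret brady_surface Ed Fs \<Sigma>
    using assms by (rule brady_surface.intro)
  show ?thesis
    using card_rungs_at_eq_2 by blast
qed

end
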